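(* Let $n\ge 0$, let $a_{n,0},\dots,a_{n,n}\in\mathbb C$, and let $P_n$ be the polynomial associated to $\{a_{n,k}\}_{k=0}^n$, i.e. $\sum_{k=0}^n a_{n,k}q^kp^nq^{n-k}=P_n(z)$ in $\mathcal A$. Then for $0\le k\le n$, $$a_{n,k}=\frac{1}{\imath^{n}n!}\sum_{j=0}^{n-k}(-1)^{n-k-j}\binom{n+1}{n-k-j}P_n\!\left(\imath\left(j+\tfrac12\right)\right).$$ Equivalently, writing $P_n(z)=\sum_{r=0}^n b_{n,r}z^r$, $$a_{n,k}=\frac{1}{\imath^{n}n!}\sum_{j=0}^{n-k}(-1)^{n-k-j}\binom{n+1}{n-k-j}\sum_{r=0}^{n}b_{n,r}\,\imath^{r}\left(j+\tfrac12\right)^{r}.$$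
   Context: $\imath=\sqrt{-1}$. $\mathcal{A}$ denotes the quotient of the free associative $\mathbb{C}$-algebra on two noncommuting generators $p,q$ by the two-sided ideal generated by $qp-pq-\imath$, and $z=\tfrac12(qp+pq)\in\mathcal A$. For $n\ge0$ and complex numbers $a_{n,0},\dots,a_{n,n}$, there is a unique polynomial $P_n\in\mathbb{C}[X]$ of degree at most $n$ with $\sum_{k=0}^n a_{n,k}q^kp^nq^{n-k}=P_n(z)$ in $\mathcal A$; it is called the polynomial associated to $\{a_{n,k}\}$. *)

theory Defs
  imports Complex_Main "HOL-Computational_Algebra.Polynomial"
begin

text \<open>The free associative C-algebra on two noncommuting generators p, q:
  elements are coefficient functions on words (lists of letters); only
  finitely supported ones arise below.\<close>

datatype letter = Lp | Lq

type_synonym falg = "letter list \<Rightarrow> complex"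

definition fa_mult :: "falg \<Rightarrow> falg \<Rightarrow> falg" where
  "fa_mult f g = (\<lambda>w. \<Sum>i\<le>length w. f (take i w) * g (drop i w))"

definition fa_add :: "falg \<Rightarrow> falg \<Rightarrow> falg" where
  "fa_add f g = (\<lambda>w. f w + g w)"

definition fa_smult :: "complex \<Rightarrow> falg \<Rightarrow> falg" where
  "fa_smult c f = (\<lambda>w. c * f w)"

definition fa_zero :: falg where
  "fa_zero = (\<lambda>w. 0)"

definition fa_word :: "letter list \<Rightarrow> falg" where
  "fa_word u = (\<lambda>w. if w = u then 1 else 0)"

definition fa_one :: falg where "fa_one = fa_word []"
definition fa_p :: falg where "fa_p = fa_word [Lp]"
definition fa_q :: falg where "fa_q = fa_word [Lq]"

definition fa_sum :: "('i \<Rightarrow> falg) \<Rightarrow> 'i set \<Rightarrow> falg" where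
  "fa_sum F I = (\<lambda>w. \<Sum>i\<in>I. F i w)"

primrec fa_pow :: "falg \<Rightarrow> nat \<Rightarrow> falg" where
  "fa_pow x 0 = fa_one"
| "fa_pow x (Suc n) = fa_mult (fa_pow x n) x"

definition weyl_rel :: falg where
  "weyl_rel = (\<lambda>w. fa_word [Lq, Lp] w - fa_word [Lp, Lq] w - \<i> * fa_one w)"

inductive_set weyl_ideal :: "falg set" where
  rel: "weyl_rel \<in> weyl_ideal"
| zero: "fa_zero \<in> weyl_ideal"
| add: "x \<in> weyl_ideal \<Longrightarrow> y \<in> weyl_ideal \<Longrightarrow> fa_add x y \<in> weyl_ideal"
| smult: "x \<in> weyl_ideal \<Longrightarrow> fa_smult c x \<in> weyl_ideal"
| lmult: "x \<in> weyl_ideal \<Longrightarrow> fa_mult (fa_word [l]) x \<in> weyl_ideal"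
| rmult: "x \<in> weyl_ideal \<Longrightarrow> fa_mult x (fa_word [l]) \<in> weyl_ideal"

definition weyl_eq :: "falg \<Rightarrow> falg \<Rightarrow> bool" where
  "weyl_eq x y \<longleftrightarrow> (\<lambda>w. x w - y w) \<in> weyl_ideal"

definition weyl_z :: falg where
  "weyl_z = fa_smult (1/2) (fa_add (fa_mult fa_q fa_p) (fa_mult fa_p fa_q))"

definition fa_poly :: "complex poly \<Rightarrow> falg \<Rightarrow> falg" where
  "fa_poly P x = fa_sum (\<lambda>r. fa_smult (coeff P r) (fa_pow x r)) {..degree P}"

definition weyl_lhs :: "nat \<Rightarrow> (nat \<Rightarrow> complex) \<Rightarrow> falg" where
  "weyl_lhs n a = fa_sum (\<lambda>k. fa_smult (a k)
      (fa_mult (fa_mult (fa_pow fa_q k) (fa_pow fa_p n)) (fa_pow fa_q (n - k)))) {..n}"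

definition associated_poly :: "nat \<Rightarrow> (nat \<Rightarrow> complex) \<Rightarrow> complex poly \<Rightarrow> bool" where
  "associated_poly n a P \<longleftrightarrow> degree P \<le> n \<and> weyl_eq (weyl_lhs n a) (fa_poly P weyl_z)"

end

theory Submission
  imports Defs "HOL-Computational_Algebra.Formal_Power_Series"
begin

text \<open>The algebra acts on \<open>\<complex>[X]\<close> with p acting as multiplication by X and q as \<open>\<i> d/dX\<close>;
  this respects \<open>qp - pq = \<i>\<close>, so the defining identity may be applied to each monomial \<open>X^m\<close>.
  There z acts by the eigenvalue \<open>\<i>(m + 1/2)\<close>, and the word \<open>q^k p^n q^(n-k)\<close> multiplies
  \<open>X^m\<close> by \<open>\<i>^n n! C(m+k, n)\<close>, which gives \<open>P(\<i>(m + 1/2)) = \<i>^n n! \<Sum>\<^sub>l a\<^sub>l C(m+l, n)\<close>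
  for every m. This system is triangular in the basis \<open>C(m+l, n)\<close>, \<open>l \<le> n\<close>, and is inverted by
  an alternating sum that collapses by Vandermonde's identity applied to
  \<open>(1-x)^(n+1) (1-x)^-(n+1) = 1\<close>.\<close>

lemma alternating_choose_convolution:
  "(\<Sum>t=0..e. (-1)^t * of_nat (Suc n choose t) * of_nat ((n + e - t) choose n) :: 'a :: field_char_0)
     = (if e = 0 then 1 else 0)"
proof -
  have summand: "(of_nat (Suc n) gchoose t) * ((- of_nat (Suc n)) gchoose (e - t)) =
      (-1)^e * ((-1)^t * of_nat (Suc n choose t) * of_nat ((n + e - t) choose n) :: 'a)"
    if "t \<le> e" for t
  proof -
    have "((- of_nat (Suc n)) gchoose (e - t) :: 'a) = (-1)^(e-t) * of_nat ((n + (e - t)) choose (e - t))"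
      using gbinomial_minus[of "of_nat (Suc n) :: 'a" "e - t"]
      by (simp add: binomial_gbinomial add.commute)
    moreover have "(n + (e - t)) choose (e - t) = (n + e - t) choose n"
      using that by (metis add_diff_assoc binomial_symmetric le_add2 add_diff_cancel_right')
    moreover have "(-1::'a)^(e-t) = (-1)^e * (-1)^t"
    proof -
      have "(-1::'a)^e = (-1)^(e-t) * (-1)^t"
        using that by (metis le_add_diff_inverse2 power_add)
      then show ?thesis by (simp add: mult.assoc flip: power_mult_distrib)
    qed
    ultimately show ?thesis by (simp add: binomial_gbinomial algebra_simps)
  qed
  have "(-1)^e * (\<Sum>t=0..e. (-1)^t * of_nat (Suc n choose t) * of_nat ((n + e - t) choose n) :: 'a)
      = (\<Sum>t=0..e. (of_nat (Suc n) gchoose t) * ((- of_nat (Suc n)) gchoose (e - t)))"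
    unfolding sum_distrib_left by (rule sum.cong) (simp_all only: atLeastAtMost_iff summand)
  also have "\<dots> = 0 gchoose e"
    using gbinomial_Vandermonde[of "of_nat (Suc n) :: 'a" "- of_nat (Suc n)" e] by simp
  also have "\<dots> = (if e = 0 then 1 else 0)"
    by (cases e) (auto simp: gbinomial_Suc)
  finally show ?thesis by (cases "e = 0") auto
qed

lemma alternating_choose_sum_eq_delta:
  assumes "k \<le> n" "l \<le> n"
  shows "(\<Sum>j=0..n-k. (-1)^(n-k-j) * of_nat ((n+1) choose (n-k-j)) * of_nat ((j+l) choose n)
           :: 'a :: field_char_0) = (if l = k then 1 else 0)"
proof -
  have reversed: "(\<Sum>j=0..n-k. (-1)^(n-k-j) * of_nat ((n+1) choose (n-k-j)) * of_nat ((j+l) choose n) :: 'a)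
    = (\<Sum>t=0..n-k. (-1)^t * of_nat (Suc n choose t) * of_nat ((n - k - t + l) choose n))"
  proof (subst sum.atLeastAtMost_rev, rule sum.cong[OF refl])
    fix t assume "t \<in> {0..n-k}"
    then have "n - k - (n - k + 0 - t) = t" "n - k + 0 - t + l = n - k - t + l" by auto
    then show "(-1)^(n-k-(n-k+0-t)) * of_nat ((n+1) choose (n-k-(n-k+0-t))) * of_nat ((n-k+0-t+l) choose n)
        = ((-1)^t * of_nat (Suc n choose t) * of_nat ((n - k - t + l) choose n) :: 'a)"
      by simp
  qed
  show ?thesis
  proof (cases "l < k")
    case True
    then show ?thesis using reversed assms by (simp add: binomial_eq_0)
  next
    case False
    define e where "e = l - k"
    have "(\<Sum>t=0..n-k. (-1)^t * of_nat (Suc n choose t) * of_nat ((n - k - t + l) choose n) :: 'a)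
       = (\<Sum>t=0..n-k. (-1)^t * of_nat (Suc n choose t) * of_nat ((n + e - t) choose n))"
      by (rule sum.cong) (use False assms in \<open>auto simp: e_def\<close>)
    also have "\<dots> = (\<Sum>t=0..e. (-1)^t * of_nat (Suc n choose t) * of_nat ((n + e - t) choose n))"
      by (rule sum.mono_neutral_right) (use False assms in \<open>auto simp: e_def binomial_eq_0\<close>)
    also have "\<dots> = (if e = 0 then 1 else 0)"
      by (rule alternating_choose_convolution)
    finally show ?thesis using reversed False by (auto simp: e_def)
  qed
qed

lemma choose_basis_inversion:
  fixes a F :: "nat \<Rightarrow> 'a :: field_char_0"
  assumes F: "\<And>j. F j = (\<Sum>l\<le>n. a l * of_nat ((j + l) choose n))" and "k \<le> n"
  shows "(\<Sum>j=0..n-k. (-1)^(n-k-j) * of_nat ((n+1) choose (n-k-j)) * F j) = a k"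
proof -
  let ?c = "\<lambda>j. (-1)^(n-k-j) * (of_nat ((n+1) choose (n-k-j)) :: 'a)"
  have "(\<Sum>j=0..n-k. ?c j * F j) = (\<Sum>j=0..n-k. \<Sum>l\<le>n. a l * (?c j * of_nat ((j + l) choose n)))"
    unfolding F sum_distrib_left by (intro sum.cong refl) (simp only: mult.left_commute)
  also have "\<dots> = (\<Sum>l\<le>n. a l * (\<Sum>j=0..n-k. ?c j * of_nat ((j + l) choose n)))"
    unfolding sum_distrib_left by (rule sum.swap)
  also have "\<dots> = (\<Sum>l\<le>n. a l * (if l = k then 1 else 0))"
    by (intro sum.cong refl) (simp only: atMost_iff alternating_choose_sum_eq_delta[OF assms(2)])
  also have "\<dots> = a k"
    using assms(2) by (simp add: if_distrib cong: if_cong)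
  finally show ?thesis .
qed

fun letter_action :: "letter \<Rightarrow> complex poly \<Rightarrow> complex poly" where
  "letter_action Lp f = monom 1 1 * f"
| "letter_action Lq f = smult \<i> (pderiv f)"

text \<open>The first letter of a word acts last, so that the action is multiplicative.\<close>
primrec word_action :: "letter list \<Rightarrow> complex poly \<Rightarrow> complex poly" where
  "word_action [] f = f"
| "word_action (l # w) f = letter_action l (word_action w f)"

definition fa_support :: "falg \<Rightarrow> letter list set" where
  "fa_support x = {w. x w \<noteq> 0}"

text \<open>Only meaningful for finitely supported x: an infinite sum is 0.\<close>
definition fa_action :: "falg \<Rightarrow> complex poly \<Rightarrow> complex poly" where
  "fa_action x f = (\<Sum>w\<in>fa_support x. smult (x w) (word_action w f))"

lemma letter_action_add: "letter_action l (f + g) = letter_action l f + letter_action l g"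
  by (cases l) (auto simp: algebra_simps pderiv_add smult_add_right)

lemma letter_action_smult: "letter_action l (smult c f) = smult c (letter_action l f)"
  by (cases l) (auto simp: pderiv_smult mult.commute)

lemma word_action_add: "word_action w (f + g) = word_action w f + word_action w g"
  by (induction w) (auto simp: letter_action_add)

lemma word_action_smult: "word_action w (smult c f) = smult c (word_action w f)"
  by (induction w) (auto simp: letter_action_smult)

lemma word_action_zero: "word_action w 0 = 0"
  using word_action_smult[of w 0 0] by simp

lemma word_action_sum: "word_action w (\<Sum>i\<in>I. F i) = (\<Sum>i\<in>I. word_action w (F i))"
proof (cases "finite I")
  case True
  then show ?thesis
    by (induction I rule: finite_induct) (auto simp: word_action_zero word_action_add)
qed (simp add: word_action_zero)

lemma word_action_append: "word_action (u @ v) f = word_action u (word_action v f)"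
  by (induction u) auto

lemma word_action_commutator: "word_action [Lq, Lp] f - word_action [Lp, Lq] f = smult \<i> f"
  by (simp add: pderiv_mult pderiv_monom algebra_simps smult_add_right monom_0 one_pCons)

lemma smult_sum_right: "smult c (\<Sum>i\<in>I. F i) = (\<Sum>i\<in>I. smult c (F i))"
  by (rule poly_eqI) (simp add: coeff_sum sum_distrib_left)

lemma fa_action_superset:
  assumes "finite S" "fa_support x \<subseteq> S"
  shows "fa_action x f = (\<Sum>w\<in>S. smult (x w) (word_action w f))"
  unfolding fa_action_def
  by (rule sum.mono_neutral_left) (use assms in \<open>auto simp: fa_support_def\<close>)

lemma finite_support_fa_zero: "finite (fa_support fa_zero)"
  by (simp add: fa_support_def fa_zero_def)

lemma fa_action_fa_zero: "fa_action fa_zero f = 0"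
  by (simp add: fa_action_def fa_support_def fa_zero_def)

lemma finite_support_fa_add:
  "finite (fa_support x) \<Longrightarrow> finite (fa_support y) \<Longrightarrow> finite (fa_support (fa_add x y))"
  by (rule finite_subset[of _ "fa_support x \<union> fa_support y"]) (auto simp: fa_support_def fa_add_def)

lemma fa_action_fa_add:
  assumes "finite (fa_support x)" "finite (fa_support y)"
  shows "fa_action (fa_add x y) f = fa_action x f + fa_action y f"
proof -
  let ?S = "fa_support x \<union> fa_support y"
  have "fa_action (fa_add x y) f = (\<Sum>w\<in>?S. smult (fa_add x y w) (word_action w f))"
    by (rule fa_action_superset) (use assms in \<open>auto simp: fa_support_def fa_add_def\<close>)
  also have "\<dots> = (\<Sum>w\<in>?S. smult (x w) (word_action w f)) + (\<Sum>w\<in>?S. smult (y w) (word_action w f))"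
    by (simp add: fa_add_def smult_add_left sum.distrib)
  also have "\<dots> = fa_action x f + fa_action y f"
    using assms fa_action_superset[of ?S x f] fa_action_superset[of ?S y f] by simp
  finally show ?thesis .
qed

lemma finite_support_fa_smult: "finite (fa_support x) \<Longrightarrow> finite (fa_support (fa_smult c x))"
  by (rule finite_subset[of _ "fa_support x"]) (auto simp: fa_support_def fa_smult_def)

lemma fa_action_fa_smult:
  assumes "finite (fa_support x)"
  shows "fa_action (fa_smult c x) f = smult c (fa_action x f)"
proof -
  have "fa_action (fa_smult c x) f = (\<Sum>w\<in>fa_support x. smult (fa_smult c x w) (word_action w f))"
    by (rule fa_action_superset) (use assms in \<open>auto simp: fa_support_def fa_smult_def\<close>)
  then show ?thesis by (simp add: fa_action_def smult_sum_right fa_smult_def)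
qed

lemma fa_action_smult_right: "fa_action x (smult c f) = smult c (fa_action x f)"
  by (simp add: fa_action_def smult_sum_right word_action_smult mult.commute)

lemma finite_support_fa_sum:
  "finite I \<Longrightarrow> (\<And>i. i \<in> I \<Longrightarrow> finite (fa_support (F i))) \<Longrightarrow> finite (fa_support (fa_sum F I))"
  by (rule finite_subset[of _ "\<Union>i\<in>I. fa_support (F i)"])
     (auto simp: fa_support_def fa_sum_def intro: ccontr)

lemma fa_action_fa_sum:
  assumes "finite I" "\<And>i. i \<in> I \<Longrightarrow> finite (fa_support (F i))"
  shows "fa_action (fa_sum F I) f = (\<Sum>i\<in>I. fa_action (F i) f)"
  using assms
proof (induction I rule: finite_induct)
  case empty
  then show ?case by (simp add: fa_sum_def fa_action_def fa_support_def)
next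
  case (insert i I)
  have "fa_sum F (insert i I) = fa_add (F i) (fa_sum F I)"
    using insert.hyps by (simp add: fa_sum_def fa_add_def)
  then show ?case
    using insert by (simp add: fa_action_fa_add finite_support_fa_sum)
qed

lemma fa_mult_word_left:
  "fa_mult (fa_word u) y = (\<lambda>w. if take (length u) w = u then y (drop (length u) w) else 0)"
proof
  fix w
  have "fa_mult (fa_word u) y w =
     (\<Sum>i\<le>length w. if i = length u then (if take (length u) w = u then y (drop (length u) w) else 0) else 0)"
    unfolding fa_mult_def fa_word_def by (rule sum.cong) auto
  then show "fa_mult (fa_word u) y w = (if take (length u) w = u then y (drop (length u) w) else 0)"
    by (auto simp: min_def)
qed

lemma fa_mult_word_right:
  "fa_mult x (fa_word u) = (\<lambda>w. if length u \<le> length w \<and> drop (length w - length u) w = u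
      then x (take (length w - length u) w) else 0)"
proof
  fix w
  have "fa_mult x (fa_word u) w =
     (\<Sum>i\<le>length w. if i = length w - length u then (if length u \<le> length w \<and> drop (length w - length u) w = u
      then x (take (length w - length u) w) else 0) else 0)"
    unfolding fa_mult_def fa_word_def by (rule sum.cong) auto
  then show "fa_mult x (fa_word u) w = (if length u \<le> length w \<and> drop (length w - length u) w = u
      then x (take (length w - length u) w) else 0)"
    by auto
qed

lemma fa_mult_fa_word: "fa_mult (fa_word u) (fa_word v) = fa_word (u @ v)"
  unfolding fa_mult_word_left
  by (rule ext) (auto simp: fa_word_def, metis append_take_drop_id)

lemma fa_pow_fa_word: "fa_pow (fa_word [l]) n = fa_word (replicate n l)"
  by (induction n) (auto simp: fa_one_def fa_mult_fa_word replicate_append_same)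

lemma fa_support_fa_word: "fa_support (fa_word u) = {u}"
  by (auto simp: fa_support_def fa_word_def)

lemma fa_action_fa_word: "fa_action (fa_word u) f = word_action u f"
  unfolding fa_action_def fa_support_fa_word by (simp add: fa_word_def)

lemma fa_support_mult_word_left: "fa_support (fa_mult (fa_word u) y) = (\<lambda>v. u @ v) ` fa_support y"
proof (rule set_eqI, rule iffI)
  fix w assume "w \<in> fa_support (fa_mult (fa_word u) y)"
  then have prefix: "take (length u) w = u" and "y (drop (length u) w) \<noteq> 0"
    by (simp_all add: fa_support_def fa_mult_word_left split: if_splits)
  moreover have "w = u @ drop (length u) w"
    using prefix by (metis append_take_drop_id)
  ultimately show "w \<in> (\<lambda>v. u @ v) ` fa_support y"
    unfolding fa_support_def by blast
qed (auto simp: fa_support_def fa_mult_word_left)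

lemma fa_support_mult_word_right: "fa_support (fa_mult x (fa_word u)) = (\<lambda>v. v @ u) ` fa_support x"
proof (rule set_eqI, rule iffI)
  fix w assume "w \<in> fa_support (fa_mult x (fa_word u))"
  then have suffix: "drop (length w - length u) w = u" and "x (take (length w - length u) w) \<noteq> 0"
    by (simp_all add: fa_support_def fa_mult_word_right split: if_splits)
  moreover have "w = take (length w - length u) w @ u"
    using suffix by (metis append_take_drop_id)
  ultimately show "w \<in> (\<lambda>v. v @ u) ` fa_support x"
    unfolding fa_support_def by blast
qed (auto simp: fa_support_def fa_mult_word_right)

lemma fa_action_mult_word_left: "fa_action (fa_mult (fa_word u) y) f = word_action u (fa_action y f)"
proof -
  have "fa_action (fa_mult (fa_word u) y) f
      = (\<Sum>v\<in>fa_support y. smult (fa_mult (fa_word u) y (u @ v)) (word_action (u @ v) f))"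
    unfolding fa_action_def fa_support_mult_word_left by (subst sum.reindex) (auto simp: inj_on_def)
  then show ?thesis
    by (simp add: fa_mult_word_left word_action_append fa_action_def word_action_sum word_action_smult)
qed

lemma fa_action_mult_word_right: "fa_action (fa_mult x (fa_word u)) f = fa_action x (word_action u f)"
proof -
  have "fa_action (fa_mult x (fa_word u)) f
      = (\<Sum>v\<in>fa_support x. smult (fa_mult x (fa_word u) (v @ u)) (word_action (v @ u) f))"
    unfolding fa_action_def fa_support_mult_word_right by (subst sum.reindex) (auto simp: inj_on_def)
  then show ?thesis
    by (simp add: fa_mult_word_right word_action_append fa_action_def)
qed

lemma finite_support_weyl_ideal: "x \<in> weyl_ideal \<Longrightarrow> finite (fa_support x)"
proof (induction rule: weyl_ideal.induct)
  case rel
  show ?case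
    by (rule finite_subset[of _ "{[Lq, Lp], [Lp, Lq], []}"])
       (auto simp: fa_support_def weyl_rel_def fa_word_def fa_one_def)
qed (simp_all add: finite_support_fa_zero finite_support_fa_add finite_support_fa_smult
    fa_support_mult_word_left fa_support_mult_word_right)

lemma fa_action_weyl_ideal: "x \<in> weyl_ideal \<Longrightarrow> fa_action x f = 0"
proof (induction arbitrary: f rule: weyl_ideal.induct)
  case rel
  have "fa_action weyl_rel f
      = (\<Sum>w\<in>{[Lq, Lp], [Lp, Lq], []}. smult (weyl_rel w) (word_action w f))"
    by (rule fa_action_superset) (auto simp: fa_support_def weyl_rel_def fa_word_def fa_one_def)
  also have "\<dots> = word_action [Lq, Lp] f - word_action [Lp, Lq] f - smult \<i> f"
    by (simp add: weyl_rel_def fa_word_def fa_one_def)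
  finally show ?case by (simp only: word_action_commutator diff_self)
qed (simp_all add: finite_support_weyl_ideal fa_action_fa_zero fa_action_fa_add fa_action_fa_smult
    fa_action_mult_word_left fa_action_mult_word_right word_action_zero)

lemma fa_action_weyl_eq:
  assumes "weyl_eq x y" "finite (fa_support x)" "finite (fa_support y)"
  shows "fa_action x f = fa_action y f"
proof -
  have "fa_add x (fa_smult (-1) y) = (\<lambda>w. x w - y w)"
    by (simp add: fa_add_def fa_smult_def)
  then have "fa_action (fa_add x (fa_smult (-1) y)) f = 0"
    using assms(1) fa_action_weyl_ideal unfolding weyl_eq_def by simp
  then show ?thesis
    using assms(2,3) by (simp add: fa_action_fa_add finite_support_fa_smult fa_action_fa_smult)
qed

lemma weyl_z_eq: "weyl_z = fa_smult (1/2) (fa_add (fa_word [Lq, Lp]) (fa_word [Lp, Lq]))"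
  by (simp add: weyl_z_def fa_q_def fa_p_def fa_mult_fa_word)

lemma fa_mult_fa_add_right: "fa_mult x (fa_add y y') = fa_add (fa_mult x y) (fa_mult x y')"
  by (rule ext) (simp add: fa_mult_def fa_add_def distrib_left sum.distrib)

lemma fa_mult_fa_smult_right: "fa_mult x (fa_smult c y) = fa_smult c (fa_mult x y)"
  by (rule ext) (simp add: fa_mult_def fa_smult_def sum_distrib_left algebra_simps)

lemma finite_support_mult_weyl_z: "finite (fa_support x) \<Longrightarrow> finite (fa_support (fa_mult x weyl_z))"
  by (simp add: weyl_z_eq fa_mult_fa_smult_right fa_mult_fa_add_right finite_support_fa_smult
      finite_support_fa_add fa_support_mult_word_right)

lemma fa_action_mult_weyl_z:
  assumes "finite (fa_support x)"
  shows "fa_action (fa_mult x weyl_z) f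
    = smult (1/2) (fa_action x (word_action [Lq, Lp] f) + fa_action x (word_action [Lp, Lq] f))"
  using assms
  by (simp add: weyl_z_eq fa_mult_fa_smult_right fa_mult_fa_add_right finite_support_fa_smult
      finite_support_fa_add fa_support_mult_word_right fa_action_fa_smult fa_action_fa_add
      fa_action_mult_word_right)

lemma word_action_qp_monom: "word_action [Lq, Lp] (monom c m) = monom (\<i> * (of_nat m + 1) * c) m"
  by (simp add: mult_monom pderiv_monom smult_monom algebra_simps)

lemma word_action_pq_monom: "word_action [Lp, Lq] (monom c m) = monom (\<i> * of_nat m * c) m"
  by (cases m) (simp_all add: mult_monom pderiv_monom smult_monom algebra_simps)

lemma finite_support_fa_pow_weyl_z: "finite (fa_support (fa_pow weyl_z r))"
  by (induction r) (simp_all add: fa_one_def fa_support_fa_word finite_support_mult_weyl_z)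

lemma fa_action_fa_pow_weyl_z:
  "fa_action (fa_pow weyl_z r) (monom 1 m) = monom ((\<i> * (of_nat m + 1/2)) ^ r) m"
proof (induction r)
  case 0
  then show ?case by (simp add: fa_one_def fa_action_fa_word)
next
  case (Suc r)
  let ?x = "fa_pow weyl_z r"
  have "fa_action (fa_pow weyl_z (Suc r)) (monom 1 m)
     = smult (1/2) (fa_action ?x (word_action [Lq, Lp] (monom 1 m)) + fa_action ?x (word_action [Lp, Lq] (monom 1 m)))"
    by (simp only: fa_pow.simps fa_action_mult_weyl_z[OF finite_support_fa_pow_weyl_z])
  also have "\<dots> = smult (1/2) (fa_action ?x (smult (\<i> * (of_nat m + 1)) (monom 1 m))
      + fa_action ?x (smult (\<i> * of_nat m) (monom 1 m)))"
    by (simp only: word_action_qp_monom word_action_pq_monom smult_monom mult_1_right)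
  also have "\<dots> = monom ((\<i> * (of_nat m + 1/2)) ^ Suc r) m"
    unfolding fa_action_smult_right Suc.IH by (simp add: smult_monom add_monom algebra_simps)
  finally show ?case .
qed

lemma fa_action_fa_poly_weyl_z:
  "fa_action (fa_poly P weyl_z) (monom 1 m) = monom (poly P (\<i> * (of_nat m + 1/2))) m"
  by (simp add: fa_poly_def fa_action_fa_sum finite_support_fa_smult finite_support_fa_pow_weyl_z
      fa_action_fa_smult fa_action_fa_pow_weyl_z smult_monom poly_altdef flip: monom_sum)

primrec falling_fact :: "nat \<Rightarrow> nat \<Rightarrow> nat" where
  "falling_fact N 0 = 1"
| "falling_fact N (Suc j) = falling_fact N j * (N - j)"

lemma falling_fact_add: "falling_fact N (i + j) = falling_fact N i * falling_fact (N - i) j"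
  by (induction j) (auto simp: diff_diff_eq)

lemma falling_fact_eq_fact_choose: "falling_fact N j = fact j * (N choose j)"
proof (induction j)
  case (Suc j)
  have "(N - j) * (N choose j) = Suc j * (N choose Suc j)"
    by (metis binomial_absorption binomial_absorb_comp)
  then show ?case by (simp only: falling_fact.simps Suc.IH fact_Suc of_nat_id mult_ac)
qed simp

lemma word_action_q_power_monom:
  "word_action (replicate j Lq) (monom c m) = monom (\<i> ^ j * of_nat (falling_fact m j) * c) (m - j)"
  by (induction j) (simp_all add: pderiv_monom smult_monom of_nat_mult mult_ac)

lemma word_action_p_power_monom: "word_action (replicate j Lp) (monom c m) = monom c (m + j)"
  by (induction j) (auto simp: mult_monom)

text \<open>The three blocks of the word change the degree by \<open>-(n - k)\<close>, \<open>+n\<close>, \<open>-k\<close>;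
  if \<open>m < n - k\<close> both sides vanish.\<close>
lemma word_action_weyl_word_monom:
  assumes "k \<le> n"
  shows "word_action (replicate k Lq @ replicate n Lp @ replicate (n - k) Lq) (monom 1 m)
    = monom (\<i> ^ n * of_nat (fact n * ((m + k) choose n))) m"
proof (cases "n - k \<le> m")
  case True
  have "falling_fact (m + k) k * falling_fact m (n - k) = falling_fact (m + k) n"
    using falling_fact_add[of "m + k" k "n - k"] assms by simp
  moreover have "\<i> ^ k * \<i> ^ (n - k) = (\<i> ^ n :: complex)"
    using assms by (simp flip: power_add)
  moreover have "m - (n - k) + n = m + k"
    using True assms by simp
  ultimately show ?thesis
    by (simp add: word_action_append word_action_q_power_monom word_action_p_power_monom
        falling_fact_eq_fact_choose mult_ac flip: of_nat_mult)
next
  case False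
  then have "falling_fact m (n - k) = 0"
    by (simp add: falling_fact_eq_fact_choose binomial_eq_0)
  then show ?thesis
    using False assms by (simp add: word_action_append word_action_q_power_monom
        word_action_p_power_monom word_action_zero binomial_eq_0)
qed

lemma finite_support_weyl_lhs: "finite (fa_support (weyl_lhs n a))"
  by (simp add: weyl_lhs_def fa_q_def fa_p_def fa_pow_fa_word fa_mult_fa_word
      finite_support_fa_sum finite_support_fa_smult fa_support_fa_word)

lemma fa_action_weyl_lhs:
  "fa_action (weyl_lhs n a) (monom 1 m)
    = monom (\<i> ^ n * of_nat (fact n) * (\<Sum>l\<le>n. a l * of_nat ((m + l) choose n))) m"
proof -
  let ?w = "\<lambda>k. replicate k Lq @ replicate n Lp @ replicate (n - k) Lq"
  have "weyl_lhs n a = fa_sum (\<lambda>k. fa_smult (a k) (fa_word (?w k))) {..n}"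
    by (simp add: weyl_lhs_def fa_q_def fa_p_def fa_pow_fa_word fa_mult_fa_word)
  then have "fa_action (weyl_lhs n a) (monom 1 m) = (\<Sum>k\<le>n. smult (a k) (word_action (?w k) (monom 1 m)))"
    by (simp add: fa_action_fa_sum finite_support_fa_smult fa_support_fa_word fa_action_fa_smult
        fa_action_fa_word)
  then show ?thesis
    by (simp add: word_action_weyl_word_monom smult_monom sum_distrib_left mult_ac flip: monom_sum)
qed

lemma associated_poly_eval:
  assumes "associated_poly n a P"
  shows "poly P (\<i> * (of_nat m + 1/2)) = \<i> ^ n * of_nat (fact n) * (\<Sum>l\<le>n. a l * of_nat ((m + l) choose n))"
proof -
  have "fa_action (weyl_lhs n a) (monom 1 m) = fa_action (fa_poly P weyl_z) (monom 1 m)"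
    using assms unfolding associated_poly_def
    by (intro fa_action_weyl_eq) (simp_all add: finite_support_weyl_lhs fa_poly_def
        finite_support_fa_sum finite_support_fa_smult finite_support_fa_pow_weyl_z)
  then show ?thesis
    by (simp add: fa_action_weyl_lhs fa_action_fa_poly_weyl_z)
qed

lemma poly_eq_sum_upto:
  fixes P :: "'a :: comm_semiring_1 poly"
  assumes "degree P \<le> n"
  shows "poly P x = (\<Sum>r=0..n. coeff P r * x ^ r)"
  unfolding poly_altdef atLeast0AtMost
  by (rule sum.mono_neutral_left) (use assms in \<open>auto simp: coeff_eq_0\<close>)

theorem theorem3p1:
  fixes n :: nat and a :: "nat \<Rightarrow> complex" and P :: "complex poly" and k :: nat
  assumes "associated_poly n a P"
    and "k \<le> n"
  shows "a k = (1 / (\<i> ^ n * of_nat (fact n))) *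
           (\<Sum>j=0..n-k. (-1) ^ (n - k - j) * of_nat ((n + 1) choose (n - k - j))
              * poly P (\<i> * (of_nat j + 1/2)))
    \<and> a k = (1 / (\<i> ^ n * of_nat (fact n))) *
           (\<Sum>j=0..n-k. (-1) ^ (n - k - j) * of_nat ((n + 1) choose (n - k - j))
              * (\<Sum>r=0..n. coeff P r * \<i> ^ r * (of_nat j + 1/2) ^ r))"
proof -
  define K where "K = \<i> ^ n * (of_nat (fact n) :: complex)"
  have "K \<noteq> 0" by (simp add: K_def)
  have "(\<Sum>j=0..n-k. (-1) ^ (n - k - j) * of_nat ((n + 1) choose (n - k - j))
          * poly P (\<i> * (of_nat j + 1/2))) = K * a k"
    by (rule choose_basis_inversion)
       (simp_all add: associated_poly_eval[OF assms(1)] K_def sum_distrib_left mult_ac assms(2))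
  then have coefficient: "a k = (1 / K) * (\<Sum>j=0..n-k. (-1) ^ (n - k - j) * of_nat ((n + 1) choose (n - k - j))
          * poly P (\<i> * (of_nat j + 1/2)))"
    using \<open>K \<noteq> 0\<close> by simp
  have "degree P \<le> n"
    using assms(1) by (simp add: associated_poly_def)
  then have "poly P (\<i> * (of_nat j + 1/2)) = (\<Sum>r=0..n. coeff P r * \<i> ^ r * (of_nat j + 1/2) ^ r)"
    for j :: nat
    by (simp add: poly_eq_sum_upto power_mult_distrib mult.assoc)
  with coefficient show ?thesis
    by (simp add: K_def)
qed

end
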